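(* Let $R\ge0$ and $p>0$. Let $\mathcal G$ be a hypergraph and $\pi:V(\mathcal G)\to U$ a function satisfying $|\pi(E)|=|E|$ for every $E\in\mathcal G$. If $\pi(\mathcal G)$ is $(p,R)$-Janson, then $\mathcal G$ is $(p,R)$-Janson.
   Context: A hypergraph is identified with its edge set, a family of subsets of its vertex set. $\pi(\mathcal G)$ is the hypergraph with vertex set $\pi(V(\mathcal G))$ and edge set $\{\pi(E):E\in\mathcal G\}$. For $\nu:\mathcal G\to\mathbb R_{\ge0}$: $e(\nu)=\sum_{E\in\mathcal G}\nu(E)$, $d_\nu(L)=\sum_{E\in\mathcal G,L\subset E}\nu(E)$, $\Lambda_p(\nu)=\sum_{L\subset V(\mathcal G),|L|\ge2}d_\nu(L)^2p^{-|L|}$. For $R>0$, $\mathcal G$ is $(p,R)$-Janson if there is $\nu:\mathcal G\to\mathbb R_{\ge0}$ with $\Lambda_p(\nu)<e(\nu)^2/R$; for $R=0$ every hypergraph is $(p,R)$-Janson. *)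

theory Defs
  imports Complex_Main
begin

definition hypergraph :: "'a set \<Rightarrow> 'a set set \<Rightarrow> bool" where
  "hypergraph V G \<longleftrightarrow> finite V \<and> (\<forall>E\<in>G. E \<subseteq> V)"

definition e_weight :: "'a set set \<Rightarrow> ('a set \<Rightarrow> real) \<Rightarrow> real" where
  "e_weight G \<nu> = (\<Sum>E\<in>G. \<nu> E)"

definition deg_weight :: "'a set set \<Rightarrow> ('a set \<Rightarrow> real) \<Rightarrow> 'a set \<Rightarrow> real" where
  "deg_weight G \<nu> L = (\<Sum>E\<in>{E\<in>G. L \<subseteq> E}. \<nu> E)"

definition Lambda_p :: "real \<Rightarrow> 'a set \<Rightarrow> 'a set set \<Rightarrow> ('a set \<Rightarrow> real) \<Rightarrow> real" where
  "Lambda_p p V G \<nu> = (\<Sum>L\<in>{L. L \<subseteq> V \<and> 2 \<le> card L}. (deg_weight G \<nu> L)\<^sup>2 / p ^ card L)"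

definition janson :: "real \<Rightarrow> real \<Rightarrow> 'a set \<Rightarrow> 'a set set \<Rightarrow> bool" where
  "janson p R V G \<longleftrightarrow> R = 0 \<or>
     (R > 0 \<and> (\<exists>\<nu>::'a set \<Rightarrow> real. (\<forall>E\<in>G. \<nu> E \<ge> 0) \<and>
        Lambda_p p V G \<nu> < (e_weight G \<nu>)\<^sup>2 / R))"

end

theory Submission
  imports Defs
begin

text \<open>
  Pull the weights \<open>\<mu>\<close> on \<open>\<pi>(\<G>)\<close> back to \<open>\<G>\<close> by spreading \<open>\<mu>(F)\<close> evenly over the edges
  \<open>E\<close> with \<open>\<pi>(E) = F\<close>; this preserves \<open>e\<close>, and the pulled-back weight of the edges \<open>E\<close>
  with \<open>M \<subseteq> \<pi>(E)\<close> is exactly \<open>d\<^sub>\<mu>(M)\<close>. Since \<open>\<pi>\<close> is injective on every edge, each edge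
  contains at most one set \<open>L\<close> with \<open>\<pi>(L) = M\<close>, so the degrees \<open>d\<^sub>\<nu>(L)\<close> of these sets add
  up to at most \<open>d\<^sub>\<mu>(M)\<close>, and \<open>|L| = |M|\<close> whenever \<open>d\<^sub>\<nu>(L) \<noteq> 0\<close>. As the sum of squares of
  nonnegative numbers is at most the square of their sum, \<open>\<Lambda>\<^sub>p(\<nu>) \<le> \<Lambda>\<^sub>p(\<mu>)\<close>.
\<close>

lemma sum_power2_le_power2_sum:
  fixes f :: "'a \<Rightarrow> 'b::linordered_semidom"
  assumes "finite A" and "\<And>x. x \<in> A \<Longrightarrow> 0 \<le> f x"
  shows "(\<Sum>x\<in>A. (f x)\<^sup>2) \<le> (\<Sum>x\<in>A. f x)\<^sup>2"
proof -
  have "(\<Sum>x\<in>A. (f x)\<^sup>2) \<le> (\<Sum>x\<in>A. f x * (\<Sum>y\<in>A. f y))"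
  proof (rule sum_mono)
    fix x assume "x \<in> A"
    then have "f x \<le> (\<Sum>y\<in>A. f y)"
      using assms by (intro member_le_sum) auto
    then show "(f x)\<^sup>2 \<le> f x * (\<Sum>y\<in>A. f y)"
      using assms(2)[OF \<open>x \<in> A\<close>] by (simp add: power2_eq_square mult_left_mono)
  qed
  also have "\<dots> = (\<Sum>x\<in>A. f x)\<^sup>2"
    by (simp add: power2_eq_square sum_distrib_right)
  finally show ?thesis .
qed

lemma finite_edges_if_hypergraph:
  assumes "hypergraph V G"
  shows "finite G"
  using assms unfolding hypergraph_def by (meson Pow_iff finite_Pow_iff rev_finite_subset subsetI)

lemma deg_weight_nonneg:
  assumes "\<forall>E\<in>G. 0 \<le> \<nu> E"
  shows "0 \<le> deg_weight G \<nu> L"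
  unfolding deg_weight_def using assms by (intro sum_nonneg) auto

definition pullback_weight :: "('a \<Rightarrow> 'b) \<Rightarrow> 'a set set \<Rightarrow> ('b set \<Rightarrow> real) \<Rightarrow> 'a set \<Rightarrow> real" where
  "pullback_weight \<pi> G \<mu> E = \<mu> (\<pi> ` E) / card {E'\<in>G. \<pi> ` E' = \<pi> ` E}"

lemma sum_pullback_weight:
  assumes "finite G"
  shows "(\<Sum>E\<in>{E\<in>G. P (\<pi> ` E)}. pullback_weight \<pi> G \<mu> E)
       = (\<Sum>F\<in>{F\<in>(\<lambda>E. \<pi> ` E) ` G. P F}. \<mu> F)"
proof -
  let ?G\<^sub>P = "{E\<in>G. P (\<pi> ` E)}"
  have "(\<Sum>E\<in>?G\<^sub>P. pullback_weight \<pi> G \<mu> E)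
      = (\<Sum>F\<in>(\<lambda>E. \<pi> ` E) ` ?G\<^sub>P. \<Sum>E\<in>{E\<in>?G\<^sub>P. \<pi> ` E = F}. pullback_weight \<pi> G \<mu> E)"
    using assms by (intro sum.image_gen) simp
  also have "\<dots> = (\<Sum>F\<in>{F\<in>(\<lambda>E. \<pi> ` E) ` G. P F}. \<mu> F)"
  proof (rule sum.cong)
    fix F assume F: "F \<in> {F\<in>(\<lambda>E. \<pi> ` E) ` G. P F}"
    define fibre where "fibre = {E\<in>G. \<pi> ` E = F}"
    have "{E\<in>?G\<^sub>P. \<pi> ` E = F} = fibre"
      using F by (auto simp: fibre_def)
    moreover have "fibre \<noteq> {}" and "finite fibre"
      using F assms by (auto simp: fibre_def)
    moreover have "pullback_weight \<pi> G \<mu> E = \<mu> F / card fibre" if "E \<in> fibre" for E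
      using that by (simp add: pullback_weight_def fibre_def)
    ultimately show "(\<Sum>E\<in>{E\<in>?G\<^sub>P. \<pi> ` E = F}. pullback_weight \<pi> G \<mu> E) = \<mu> F"
      by simp
  qed auto
  finally show ?thesis .
qed

lemma e_weight_pullback_weight:
  assumes "finite G"
  shows "e_weight G (pullback_weight \<pi> G \<mu>) = e_weight ((\<lambda>E. \<pi> ` E) ` G) \<mu>"
  using sum_pullback_weight[OF assms, where P = "\<lambda>_. True"] by (simp add: e_weight_def)

lemma sum_pullback_weight_covering:
  assumes "finite G"
  shows "(\<Sum>E\<in>{E\<in>G. M \<subseteq> \<pi> ` E}. pullback_weight \<pi> G \<mu> E) = deg_weight ((\<lambda>E. \<pi> ` E) ` G) \<mu> M"
  using sum_pullback_weight[OF assms, where P = "\<lambda>F. M \<subseteq> F"] by (simp add: deg_weight_def)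

lemma sum_deg_weight_same_image_le:
  assumes "finite G" and "\<forall>E\<in>G. inj_on \<pi> E" and "\<forall>E\<in>G. 0 \<le> \<nu> E"
    and "finite A" and "\<forall>L\<in>A. \<pi> ` L = M"
  shows "(\<Sum>L\<in>A. deg_weight G \<nu> L) \<le> (\<Sum>E\<in>{E\<in>G. M \<subseteq> \<pi> ` E}. \<nu> E)"
proof -
  have "(\<Sum>L\<in>A. deg_weight G \<nu> L) = (\<Sum>E\<in>G. \<Sum>L\<in>{L\<in>A. L \<subseteq> E}. \<nu> E)"
    unfolding deg_weight_def
    using sum.swap_restrict[OF assms(4,1), of "\<lambda>L E. \<nu> E" "\<lambda>L E. L \<subseteq> E"] by simp
  also have "\<dots> \<le> (\<Sum>E\<in>G. if M \<subseteq> \<pi> ` E then \<nu> E else 0)"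
  proof (rule sum_mono)
    fix E assume "E \<in> G"
    define A\<^sub>E where "A\<^sub>E = {L\<in>A. L \<subseteq> E}"
    show "(\<Sum>L\<in>A\<^sub>E. \<nu> E) \<le> (if M \<subseteq> \<pi> ` E then \<nu> E else 0)"
    proof (cases "A\<^sub>E = {}")
      case True
      then show ?thesis using assms(3) \<open>E \<in> G\<close> by simp
    next
      case False
      then have "M \<subseteq> \<pi> ` E"
        using assms(5) by (auto simp: A\<^sub>E_def intro: image_mono[THEN subsetD])
      moreover have "card A\<^sub>E \<le> 1"
        using assms(2,4,5) \<open>E \<in> G\<close> unfolding A\<^sub>E_def
        by (simp add: card_le_Suc0_iff_eq) (metis inj_on_image_eq_iff)
      ultimately show ?thesis
        using assms(3) \<open>E \<in> G\<close> mult_left_le[of "real (card A\<^sub>E)" "\<nu> E"] by (simp add: mult.commute)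
    qed
  qed
  also have "\<dots> = (\<Sum>E\<in>{E\<in>G. M \<subseteq> \<pi> ` E}. \<nu> E)"
    using assms(1) by (simp add: sum.inter_filter)
  finally show ?thesis .
qed

lemma sum_power2_deg_weight_same_image_le:
  assumes "finite G" and "\<forall>E\<in>G. inj_on \<pi> E" and "\<forall>E\<in>G. 0 \<le> \<nu> E"
    and "finite A" and "\<forall>L\<in>A. \<pi> ` L = M"
  shows "(\<Sum>L\<in>A. (deg_weight G \<nu> L)\<^sup>2) \<le> (\<Sum>E\<in>{E\<in>G. M \<subseteq> \<pi> ` E}. \<nu> E)\<^sup>2"
proof -
  have "(\<Sum>L\<in>A. (deg_weight G \<nu> L)\<^sup>2) \<le> (\<Sum>L\<in>A. deg_weight G \<nu> L)\<^sup>2"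
    using assms(3,4) by (intro sum_power2_le_power2_sum deg_weight_nonneg)
  also have "\<dots> \<le> (\<Sum>E\<in>{E\<in>G. M \<subseteq> \<pi> ` E}. \<nu> E)\<^sup>2"
    using assms sum_deg_weight_same_image_le[OF assms]
    by (intro power_mono) (auto intro: sum_nonneg deg_weight_nonneg)
  finally show ?thesis .
qed

lemma Lambda_p_le_image:
  assumes "0 < p" and "hypergraph V G" and "\<forall>E\<in>G. inj_on \<pi> E" and "\<forall>E\<in>G. 0 \<le> \<nu> E"
    and covering_le: "\<And>M. (\<Sum>E\<in>{E\<in>G. M \<subseteq> \<pi> ` E}. \<nu> E) \<le> deg_weight H \<mu> M"
  shows "Lambda_p p V G \<nu> \<le> Lambda_p p (\<pi> ` V) H \<mu>"
proof -
  define S where "S = {L. L \<subseteq> V \<and> 2 \<le> card L \<and> (\<exists>E\<in>G. L \<subseteq> E)}"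
  have "finite G" and "finite V"
    using assms(2) finite_edges_if_hypergraph by (auto simp: hypergraph_def)
  then have "finite S"
    by (simp add: S_def)
  have card_image_in_edge: "card (\<pi> ` L) = card L" if "L \<subseteq> E" and "E \<in> G" for L E
    using that assms(3) by (auto intro: card_image inj_on_subset)
  have "Lambda_p p V G \<nu> = (\<Sum>L\<in>S. (deg_weight G \<nu> L)\<^sup>2 / p ^ card L)"
    unfolding Lambda_p_def using \<open>finite V\<close>
    by (intro sum.mono_neutral_right)
      (auto simp: S_def deg_weight_def elim!: sum.not_neutral_contains_not_neutral)
  also have "\<dots> = (\<Sum>M\<in>(\<lambda>L. \<pi> ` L) ` S. \<Sum>L\<in>{L\<in>S. \<pi> ` L = M}. (deg_weight G \<nu> L)\<^sup>2 / p ^ card L)"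
    using \<open>finite S\<close> by (rule sum.image_gen)
  also have "\<dots> \<le> (\<Sum>M\<in>(\<lambda>L. \<pi> ` L) ` S. (deg_weight H \<mu> M)\<^sup>2 / p ^ card M)"
  proof (rule sum_mono)
    fix M assume "M \<in> (\<lambda>L. \<pi> ` L) ` S"
    let ?A = "{L\<in>S. \<pi> ` L = M}"
    have "(\<Sum>L\<in>?A. (deg_weight G \<nu> L)\<^sup>2 / p ^ card L) = (\<Sum>L\<in>?A. (deg_weight G \<nu> L)\<^sup>2) / p ^ card M"
      unfolding sum_divide_distrib using card_image_in_edge by (intro sum.cong) (auto simp: S_def)
    also have "\<dots> \<le> (\<Sum>E\<in>{E\<in>G. M \<subseteq> \<pi> ` E}. \<nu> E)\<^sup>2 / p ^ card M"
      using assms(1,3,4) \<open>finite G\<close> \<open>finite S\<close>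
      by (intro divide_right_mono sum_power2_deg_weight_same_image_le) auto
    also have "\<dots> \<le> (deg_weight H \<mu> M)\<^sup>2 / p ^ card M"
      using assms(1,4) covering_le[of M]
      by (intro divide_right_mono power_mono) (auto intro: sum_nonneg)
    finally show "(\<Sum>L\<in>?A. (deg_weight G \<nu> L)\<^sup>2 / p ^ card L) \<le> (deg_weight H \<mu> M)\<^sup>2 / p ^ card M" .
  qed
  also have "\<dots> \<le> (\<Sum>M\<in>{M. M \<subseteq> \<pi> ` V \<and> 2 \<le> card M}. (deg_weight H \<mu> M)\<^sup>2 / p ^ card M)"
    using \<open>finite V\<close> assms(1) card_image_in_edge
    by (intro sum_mono2) (auto simp: S_def image_mono)
  also have "\<dots> = Lambda_p p (\<pi> ` V) H \<mu>"
    by (simp add: Lambda_p_def)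
  finally show ?thesis .
qed

theorem lemma3p5:
  fixes V :: "'a set" and G :: "'a set set" and \<pi> :: "'a \<Rightarrow> 'b"
    and p R :: real
  assumes "R \<ge> 0" and "p > 0"
    and "hypergraph V G"
    and "\<forall>E\<in>G. card (\<pi> ` E) = card E"
    and "janson p R (\<pi> ` V) ((\<lambda>E. \<pi> ` E) ` G)"
  shows "janson p R V G"
proof (cases "R = 0")
  case True
  then show ?thesis by (simp add: janson_def)
next
  case False
  let ?H = "(\<lambda>E. \<pi> ` E) ` G"
  obtain \<mu> where \<mu>_nonneg: "\<forall>F\<in>?H. 0 \<le> \<mu> F"
    and \<mu>_janson: "Lambda_p p (\<pi> ` V) ?H \<mu> < (e_weight ?H \<mu>)\<^sup>2 / R"
    using assms(5) False unfolding janson_def by blast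
  define \<nu> where "\<nu> = pullback_weight \<pi> G \<mu>"
  have "finite G"
    using assms(3) by (rule finite_edges_if_hypergraph)
  have inj: "\<forall>E\<in>G. inj_on \<pi> E"
    using assms(3,4) by (auto simp: hypergraph_def inj_on_iff_eq_card finite_subset)
  have \<nu>_nonneg: "\<forall>E\<in>G. 0 \<le> \<nu> E"
    using \<mu>_nonneg by (simp add: \<nu>_def pullback_weight_def)
  have "Lambda_p p V G \<nu> \<le> Lambda_p p (\<pi> ` V) ?H \<mu>"
    using assms(2,3) inj \<nu>_nonneg unfolding \<nu>_def
    by (intro Lambda_p_le_image) (auto simp: sum_pullback_weight_covering[OF \<open>finite G\<close>])
  also have "\<dots> < (e_weight G \<nu>)\<^sup>2 / R"
    using \<mu>_janson by (simp add: \<nu>_def e_weight_pullback_weight[OF \<open>finite G\<close>])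
  finally show ?thesis
    using assms(1) False \<nu>_nonneg unfolding janson_def by auto
qed

end
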